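(* Let $B\in\mathcal O_{\widetilde{\mathfrak a}}$ be a simple $\widetilde{\mathfrak a}$-module. (1) $\mathrm{ord}_{\widetilde{\mathfrak a}}(B)=\mathrm{ord}_{\widetilde{\mathfrak a}}(v)$ for all $0\ne v\in B$, and there exists $(r,s)\in\mathbb Z_+^2$ such that $\mathcal L^{(r,s)}B=0$. (2) If $\mathrm{ord}_{\widetilde{\mathfrak a}}(B)=0$, then $B$ is a simple $\mathfrak a$-module. (3) If $r=\mathrm{ord}_{\widetilde{\mathfrak a}}(B)>0$, then $I_{r-1}$ acts bijectively on $B$.
   Context: In the Lie algebra with basis $\{d_n=t^{n+1}\frac{d}{dt},I_n=t^n\}$ (brackets $[d_n,d_m]=(m-n)d_{m+n}$, $[d_n,I_m]=mI_{m+n}$, $[I_n,I_m]=0$ for the indices used here), let $\mathfrak a=\mathrm{span}\{d_i\mid i\ge0\}$, $\widetilde{\mathfrak a}=\mathrm{span}\{d_i,I_i\mid i\ge0\}$, and $\mathcal L^{(r,s)}=\mathrm{span}\{I_{r+i},d_{s+i}\mid i\ge0\}$. $\mathcal O_{\widetilde{\mathfrak a}}$ is the category of $\widetilde{\mathfrak a}$-modules $V$ such that for each $v\in V$ there is $n>0$ with $d_iv=I_iv=0$ for all $i\ge n$. For $0\ne v\in B$, $\mathrm{ord}_{\widetilde{\mathfrak a}}(v)$ is the minimal $r\in\mathbb Z_+$ with $I_{r+i}v=0$ for all $i\ge0$, and $\mathrm{ord}_{\widetilde{\mathfrak a}}(B)$ is the maximum of the orders of its nonzero elements ($\infty$ if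 it does not exist). *)

theory Defs
  imports Main "HOL-Library.Extended_Nat"
begin

text \<open>A module over the Lie algebra  atilde = span{d_i, I_i | i >= 0}  (over the complex
numbers) on the vector space carried by the type 'v with scalar multiplication sc.\<close>

definition atilde_module ::
  "(complex \<Rightarrow> 'v::ab_group_add \<Rightarrow> 'v) \<Rightarrow> (nat \<Rightarrow> 'v \<Rightarrow> 'v) \<Rightarrow> (nat \<Rightarrow> 'v \<Rightarrow> 'v) \<Rightarrow> bool" where
  "atilde_module sc d I \<longleftrightarrow>
     vector_space sc \<and>
     (\<forall>n. Vector_Spaces.linear sc sc (d n)) \<and> (\<forall>n. Vector_Spaces.linear sc sc (I n)) \<and>
     (\<forall>n m v. d n (d m v) - d m (d n v) = sc (of_int (int m - int n)) (d (m + n) v)) \<and>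
     (\<forall>n m v. d n (I m v) - I m (d n v) = sc (of_nat m) (I (m + n) v)) \<and>
     (\<forall>n m v. I n (I m v) - I m (I n v) = 0)"

definition in_O_atilde :: "(nat \<Rightarrow> 'v::zero \<Rightarrow> 'v) \<Rightarrow> (nat \<Rightarrow> 'v \<Rightarrow> 'v) \<Rightarrow> bool" where
  "in_O_atilde d I \<longleftrightarrow> (\<forall>v. \<exists>n>0. \<forall>i\<ge>n. d i v = 0 \<and> I i v = 0)"

text \<open>Submodule for the subalgebra spanned by the operators in the family ops.\<close>
definition is_submodule ::
  "(complex \<Rightarrow> 'v::ab_group_add \<Rightarrow> 'v) \<Rightarrow> ('v \<Rightarrow> 'v) set \<Rightarrow> 'v set \<Rightarrow> bool" where
  "is_submodule sc ops W \<longleftrightarrow> module.subspace sc W \<and> (\<forall>f\<in>ops. \<forall>w\<in>W. f w \<in> W)"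

definition simple_module ::
  "(complex \<Rightarrow> 'v::ab_group_add \<Rightarrow> 'v) \<Rightarrow> ('v \<Rightarrow> 'v) set \<Rightarrow> bool" where
  "simple_module sc ops \<longleftrightarrow> (UNIV :: 'v set) \<noteq> {0} \<and>
     (\<forall>W. is_submodule sc ops W \<longrightarrow> W = {0} \<or> W = UNIV)"

definition ord_vec :: "(nat \<Rightarrow> 'v::zero \<Rightarrow> 'v) \<Rightarrow> 'v \<Rightarrow> nat" where
  "ord_vec I v = (LEAST r. \<forall>i. I (r + i) v = 0)"

definition ord_mod :: "(nat \<Rightarrow> 'v::zero \<Rightarrow> 'v) \<Rightarrow> enat" where
  "ord_mod I = (if \<exists>m. m \<in> ord_vec I ` {v. v \<noteq> 0} \<and> (\<forall>k\<in>ord_vec I ` {v. v \<noteq> 0}. k \<le> m)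
               then enat (GREATEST m. m \<in> ord_vec I ` {v. v \<noteq> 0}) else \<infinity>)"

end

theory Submission
  imports Defs
begin

text \<open>Every operator of the Lie algebra commutes with the action up to terms
  \<open>[d\<^sub>j, I\<^sub>m] = m I\<^sub>m\<^sub>+\<^sub>j\<close>, \<open>[d\<^sub>j, d\<^sub>m] = (m - j) d\<^sub>m\<^sub>+\<^sub>j\<close> that only raise the index.
  Hence the common kernel of a tail \<open>I\<^sub>r, I\<^sub>r\<^sub>+\<^sub>1, \<dots>\<close> is a submodule, and by simplicity
  it is everything as soon as it contains one nonzero vector: all nonzero vectors have
  the same order \<open>r\<close>. Once \<open>I\<^sub>r\<^sub>+\<^sub>i B = 0\<close>, the same argument applies to the tail
  \<open>d\<^sub>s, d\<^sub>s\<^sub>+\<^sub>1, \<dots>\<close> for \<open>s \<ge> r\<close>, and to the kernel and the image of \<open>I\<^sub>r\<^sub>-\<^sub>1\<close>, which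
  commutes with the action modulo the scalar \<open>(r-1) I\<^sub>r\<^sub>-\<^sub>1\<close> coming from \<open>d\<^sub>0\<close>.
  The kernel cannot be all of \<open>B\<close> by minimality of \<open>r\<close>, and the image is nonzero,
  so \<open>I\<^sub>r\<^sub>-\<^sub>1\<close> is bijective.\<close>

lemma I_ord_vec:
  assumes "in_O_atilde d I"
  shows "I (ord_vec I v + i) v = 0"
proof -
  obtain n where "\<forall>i\<ge>n. d i v = 0 \<and> I i v = 0"
    using assms unfolding in_O_atilde_def by blast
  then have "\<exists>r. \<forall>i. I (r + i) v = 0" by (intro exI[of _ n]) simp
  then show ?thesis
    unfolding ord_vec_def by (rule LeastI2_ex) blast
qed

lemma ord_vec_le: "(\<And>i. I (k + i) v = 0) \<Longrightarrow> ord_vec I v \<le> k"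
  unfolding ord_vec_def by (rule Least_le) blast

locale atilde_rep =
  fixes sc :: "complex \<Rightarrow> 'v::ab_group_add \<Rightarrow> 'v"
    and d I :: "nat \<Rightarrow> 'v \<Rightarrow> 'v"
  assumes atilde_module: "atilde_module sc d I"
begin

abbreviation submodule :: "'v set \<Rightarrow> bool" where
  "submodule \<equiv> is_submodule sc (range d \<union> range I)"

lemma module: "module sc"
  using atilde_module by (simp add: atilde_module_def module_iff_vector_space)

lemma module_hom_d: "module_hom sc sc (d n)"
  and module_hom_I: "module_hom sc sc (I n)"
  using atilde_module by (simp_all add: atilde_module_def module_hom_iff_linear)

lemma d_zero [simp]: "d n 0 = 0"
  and I_zero [simp]: "I n 0 = 0"
  and scale_zero [simp]: "sc c 0 = 0"
  using module_hom.zero[OF module_hom_d] module_hom.zero[OF module_hom_I]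
    module.scale_zero_right[OF module] by auto

lemma d_d_commute: "d n (d m v) = d m (d n v) + sc (of_int (int m - int n)) (d (m + n) v)"
proof -
  have "d n (d m v) - d m (d n v) = sc (of_int (int m - int n)) (d (m + n) v)"
    using atilde_module unfolding atilde_module_def by blast
  then show ?thesis by (simp add: diff_eq_eq add.commute)
qed

lemma d_I_commute: "d n (I m v) = I m (d n v) + sc (of_nat m) (I (m + n) v)"
proof -
  have "d n (I m v) - I m (d n v) = sc (of_nat m) (I (m + n) v)"
    using atilde_module unfolding atilde_module_def by blast
  then show ?thesis by (simp add: diff_eq_eq add.commute)
qed

lemma I_I_commute: "I n (I m v) = I m (I n v)"
proof -
  have "I n (I m v) - I m (I n v) = 0"
    using atilde_module unfolding atilde_module_def by blast
  then show ?thesis by simp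
qed

lemma submoduleI:
  assumes "module.subspace sc W"
    and "\<And>j w. w \<in> W \<Longrightarrow> d j w \<in> W" and "\<And>j w. w \<in> W \<Longrightarrow> I j w \<in> W"
  shows "submodule W"
  using assms unfolding is_submodule_def by blast

lemma subspace_common_kernel:
  assumes "\<And>i. module_hom sc sc (f i)"
  shows "module.subspace sc {w. \<forall>i. f i w = 0}"
  using module_hom.add[OF assms] module_hom.scale[OF assms] module_hom.zero[OF assms]
  by (auto simp: module.subspace_def[OF module])

lemma submodule_I_tail_kernel: "submodule {w. \<forall>i. I (r + i) w = 0}"
proof (rule submoduleI)
  show "module.subspace sc {w. \<forall>i. I (r + i) w = 0}"
    by (rule subspace_common_kernel[OF module_hom_I])
next
  fix j w assume w: "w \<in> {w. \<forall>i. I (r + i) w = 0}"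
  show "I j w \<in> {w. \<forall>i. I (r + i) w = 0}"
    using w by (simp add: I_I_commute)
  have "I (r + i) (d j w) = 0" for i
    using d_I_commute[of j "r + i" w] w by (simp add: add.assoc)
  then show "d j w \<in> {w. \<forall>i. I (r + i) w = 0}" by simp
qed

lemma submodule_d_tail_kernel:
  assumes I_tail: "\<And>i w. I (r + i) w = 0" and "r \<le> s"
  shows "submodule {w. \<forall>i. d (s + i) w = 0}"
proof (rule submoduleI)
  show "module.subspace sc {w. \<forall>i. d (s + i) w = 0}"
    by (rule subspace_common_kernel[OF module_hom_d])
next
  fix j w assume w: "w \<in> {w. \<forall>i. d (s + i) w = 0}"
  have "d (s + i) (d j w) = 0" for i
    using w d_d_commute[of "s + i" j w] w[simplified, rule_format, of "j + i"]
    by (simp add: add.left_commute)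
  then show "d j w \<in> {w. \<forall>i. d (s + i) w = 0}" by simp
  have "I (j + (s + i)) w = 0" for i
    using I_tail[of "j + (s + i) - r" w] \<open>r \<le> s\<close> by simp
  then have "d (s + i) (I j w) = 0" for i
    using d_I_commute[of "s + i" j w] w by simp
  then show "I j w \<in> {w. \<forall>i. d (s + i) w = 0}" by simp
qed

lemma I_above_vanishes:
  assumes I_tail: "\<And>i w. I (Suc p + i) w = 0"
  shows "I (p + j) w = (if j = 0 then I p w else 0)"
  using I_tail[of "j - 1" w] by (cases j) simp_all

lemma submodule_kernel_I:
  assumes "\<And>i w. I (Suc p + i) w = 0"
  shows "submodule {w. I p w = 0}"
proof (rule submoduleI)
  show "module.subspace sc {w. I p w = 0}"
    using subspace_common_kernel[of "\<lambda>_. I p"] module_hom_I by simp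
next
  fix j w assume w: "w \<in> {w. I p w = 0}"
  then show "I j w \<in> {w. I p w = 0}"
    by (simp add: I_I_commute)
  have "I (p + j) w = 0"
    using w I_above_vanishes[OF assms, of j w] by simp
  then show "d j w \<in> {w. I p w = 0}"
    using w d_I_commute[of j p w] by simp
qed

lemma submodule_range_I:
  assumes "\<And>i w. I (Suc p + i) w = 0"
  shows "submodule (range (I p))"
proof (rule submoduleI)
  show "module.subspace sc (range (I p))"
    using module_hom.subspace_image[OF module_hom_I module.subspace_UNIV[OF module]] .
next
  fix j w assume "w \<in> range (I p)"
  then obtain x where x: "w = I p x" by blast
  then show "I j w \<in> range (I p)"
    by (metis I_I_commute rangeI)
  have "d j w = I p (d j x + (if j = 0 then sc (of_nat p) x else 0))"
    using d_I_commute[of j p x] I_above_vanishes[OF assms, of j x] x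
      module_hom.add[OF module_hom_I] module_hom.scale[OF module_hom_I]
    by simp
  then show "d j w \<in> range (I p)" by blast
qed

end

locale simple_atilde_rep_O = atilde_rep sc d I
  for sc :: "complex \<Rightarrow> 'v::ab_group_add \<Rightarrow> 'v" and d I +
  assumes in_O: "in_O_atilde d I"
    and simple: "simple_module sc (range d \<union> range I)"
begin

lemma exists_nonzero: "\<exists>v. v \<noteq> (0::'v)"
  using simple by (auto simp: simple_module_def)

lemma submodule_eq_UNIV:
  assumes "submodule W" and "v \<in> W" and "v \<noteq> 0"
  shows "W = UNIV"
  using assms simple unfolding simple_module_def by blast

lemma I_ord_vec_annihilates:
  assumes "v \<noteq> 0"
  shows "I (ord_vec I v + i) w = 0"
  using submodule_eq_UNIV[OF submodule_I_tail_kernel _ assms] I_ord_vec[OF in_O] by blast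

lemma ord_vec_eq:
  assumes "u \<noteq> 0" and "v \<noteq> 0"
  shows "ord_vec I u = ord_vec I v"
  by (intro antisym ord_vec_le I_ord_vec_annihilates assms)

lemma ord_mod_eq_ord_vec:
  assumes "v \<noteq> 0"
  shows "ord_mod I = enat (ord_vec I v)"
proof -
  have "ord_vec I ` {v. v \<noteq> 0} = {ord_vec I v}"
    using ord_vec_eq assms by blast
  then show ?thesis
    unfolding ord_mod_def by (simp add: Greatest_equality)
qed

lemma d_I_tails_annihilate: "\<exists>r s. \<forall>i v. I (r + i) v = 0 \<and> d (s + i) v = 0"
proof -
  obtain v :: 'v where v: "v \<noteq> 0" using exists_nonzero by blast
  define r where "r = ord_vec I v"
  obtain n where n: "\<forall>i\<ge>n. d i v = 0"
    using in_O unfolding in_O_atilde_def by blast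
  have I_tail: "I (r + i) w = 0" for i w
    unfolding r_def using I_ord_vec_annihilates[OF v] .
  have "v \<in> {w. \<forall>i. d (max r n + i) w = 0}"
    using n by simp
  then have "{w. \<forall>i. d (max r n + i) w = 0} = UNIV"
    using submodule_eq_UNIV[OF submodule_d_tail_kernel[OF I_tail] _ v] by simp
  then show ?thesis using I_tail by blast
qed

lemma simple_module_d_if_ord_mod_zero:
  assumes "ord_mod I = 0"
  shows "simple_module sc (range d)"
  unfolding simple_module_def
proof (intro conjI allI impI)
  obtain v :: 'v where v: "v \<noteq> 0" using exists_nonzero by blast
  then have "ord_vec I v = 0"
    using assms ord_mod_eq_ord_vec by (simp add: zero_enat_def)
  then have I_vanishes: "I i w = 0" for i w
    using I_ord_vec_annihilates[OF v, of i w] by simp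
  show "(UNIV :: 'v set) \<noteq> {0}"
    using v by blast
  fix W assume "is_submodule sc (range d) W"
  moreover then have "0 \<in> W"
    by (simp add: is_submodule_def module.subspace_def[OF module])
  ultimately have "submodule W"
    using I_vanishes unfolding is_submodule_def by auto
  then show "W = {0} \<or> W = UNIV"
    using simple by (simp add: simple_module_def)
qed

lemma bij_I_pred_ord_mod:
  assumes "ord_mod I = enat (Suc p)"
  shows "bij (I p)"
proof -
  obtain v :: 'v where v: "v \<noteq> 0" using exists_nonzero by blast
  have ord_v: "ord_vec I v = Suc p"
    using assms ord_mod_eq_ord_vec[OF v] by simp
  have I_tail: "I (Suc p + i) w = 0" for i w
    using I_ord_vec_annihilates[OF v, of i w] unfolding ord_v .
  have kernel: "{w. I p w = 0} = {0}"
  proof (rule ccontr)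
    assume "{w. I p w = 0} \<noteq> {0}"
    then obtain u where "u \<noteq> 0" "I p u = 0"
      using I_zero by blast
    then have "{w. I p w = 0} = UNIV"
      using submodule_eq_UNIV[OF submodule_kernel_I[OF I_tail]] by blast
    then have "I (p + i) v = 0" for i
      using I_above_vanishes[OF I_tail, of i v] by auto
    then have "ord_vec I v \<le> p"
      by (rule ord_vec_le)
    then show False using ord_v by simp
  qed
  then have inj: "inj (I p)"
    using module_hom.inj_iff_eq_0[OF module_hom_I] by blast
  then have "I p v \<noteq> 0"
    using v injD[OF inj, of v 0] by auto
  then have "surj (I p)"
    using submodule_eq_UNIV[OF submodule_range_I[OF I_tail]] by blast
  with inj show ?thesis by (rule bijI)
qed

end

theorem lemma28:
  fixes sc :: "complex \<Rightarrow> 'v::ab_group_add \<Rightarrow> 'v"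
    and d I :: "nat \<Rightarrow> 'v \<Rightarrow> 'v"
  assumes mod: "atilde_module sc d I"
    and O: "in_O_atilde d I"
    and simple: "simple_module sc (range d \<union> range I)"
  shows "(\<forall>v. v \<noteq> 0 \<longrightarrow> ord_mod I = enat (ord_vec I v))
       \<and> (\<exists>r s. \<forall>i v. I (r + i) v = 0 \<and> d (s + i) v = 0)
       \<and> (ord_mod I = 0 \<longrightarrow> simple_module sc (range d))
       \<and> (\<forall>r. ord_mod I = enat r \<and> r > 0 \<longrightarrow> bij (I (r - 1)))"
proof -
  interpret simple_atilde_rep_O sc d I
    using assms by unfold_locales simp_all
  show ?thesis
  proof (intro conjI allI impI)
    show "ord_mod I = enat (ord_vec I v)" if "v \<noteq> 0" for v
      using that by (rule ord_mod_eq_ord_vec)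
    show "\<exists>r s. \<forall>i v. I (r + i) v = 0 \<and> d (s + i) v = 0"
      by (rule d_I_tails_annihilate)
    show "simple_module sc (range d)" if "ord_mod I = 0"
      using that by (rule simple_module_d_if_ord_mod_zero)
    show "bij (I (r - 1))" if "ord_mod I = enat r \<and> r > 0" for r
      using that bij_I_pred_ord_mod[of "r - 1"] by simp
  qed
qed

end
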